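(* Let $C$ be an $(n,\alpha,v,\rho)$-FR code, let $k\in\{1,\dots,n\}$ and let $M\in\{1,\dots,v\}$ be an integer with $M\le M_k(C)$ (i.e. a file of size $M$ can be stored using $C$ with reconstruction degree $k$). Then $$k\ \ge\ \left\lceil \frac{n\binom{M-1}{\alpha}}{\binom{v}{\alpha}}\right\rceil+1 .$$
   Context: An incidence structure is a triple $(\mathcal P,\mathcal B,\mathcal I)$ with $\mathcal P$ (points) and $\mathcal B$ (blocks) finite sets and $\mathcal I\subseteq \mathcal P\times\mathcal B$; repeated blocks are allowed. An $(n,\alpha,v,\rho)$-FR code is an incidence structure with $|\mathcal B|=n$, $|\mathcal P|=v$, every point incident with exactly $\rho$ blocks and every block incident with exactly $\alpha$ points. The supported file size is $M_k(C)=\min_{\mathcal K\subseteq\mathcal B,|\mathcal K|=k}|\{p\in\mathcal P:\exists B\in\mathcal K,(p,B)\in\mathcal I\}|$. Binomial coefficients $\binom{a}{b}$ are $0$ when $a<b$. *)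

theory Defs
  imports Complex_Main
begin

text \<open>An incidence structure (P, B, I): finite point set P, finite block set B
  (blocks are labels, so repeated blocks, i.e. blocks with equal point sets,
  are allowed), and incidence relation I \<subseteq> P \<times> B.\<close>

definition FR_code ::
  "'p set \<Rightarrow> 'b set \<Rightarrow> ('p \<times> 'b) set \<Rightarrow> nat \<Rightarrow> nat \<Rightarrow> nat \<Rightarrow> nat \<Rightarrow> bool" where
  "FR_code P B I n \<alpha> v \<rho> \<longleftrightarrow>
     finite P \<and> finite B \<and> I \<subseteq> P \<times> B \<and>
     card B = n \<and> card P = v \<and>
     (\<forall>p\<in>P. card {b\<in>B. (p, b) \<in> I} = \<rho>) \<and>
     (\<forall>b\<in>B. card {p\<in>P. (p, b) \<in> I} = \<alpha>)"

definition file_size :: "'p set \<Rightarrow> 'b set \<Rightarrow> ('p \<times> 'b) set \<Rightarrow> nat \<Rightarrow> nat" where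
  "file_size P B I k =
     Min ((\<lambda>K. card {p\<in>P. \<exists>b\<in>K. (p, b) \<in> I}) ` {K. K \<subseteq> B \<and> card K = k})"

end

theory Submission
  imports Defs
begin

text \<open>Double count the pairs (b, S) where S is an (M-1)-subset of the points containing
  every point of block b. Each block lies in \<open>(v-\<alpha>) choose (M-1-\<alpha>)\<close> such sets S, while
  an (M-1)-set can contain at most k-1 blocks, since otherwise k blocks would cover fewer
  than \<open>M \<le> M\<^sub>k(C)\<close> points. Hence \<open>n\<cdot>C(v-\<alpha>, M-1-\<alpha>) \<le> (k-1)\<cdot>C(v, M-1)\<close>, and
  \<open>C(v,M-1)\<cdot>C(M-1,\<alpha>) = C(v,\<alpha>)\<cdot>C(v-\<alpha>,M-1-\<alpha>)\<close> turns this into the claim.\<close>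

definition block_points :: "'p set \<Rightarrow> ('p \<times> 'b) set \<Rightarrow> 'b \<Rightarrow> 'p set" where
  "block_points P I b = {p\<in>P. (p, b) \<in> I}"

lemma card_supersets_with_card:
  assumes "finite P" and "A \<subseteq> P" and "card A \<le> m"
  shows "card {S. S \<subseteq> P \<and> card S = m \<and> A \<subseteq> S} = (card P - card A) choose (m - card A)"
proof -
  have fin_A: "finite A" using assms(1,2) finite_subset by blast
  have image: "{S. S \<subseteq> P \<and> card S = m \<and> A \<subseteq> S}
      = (\<lambda>T. T \<union> A) ` {T. T \<subseteq> P - A \<and> card T = m - card A}"
  proof (intro set_eqI iffI)
    fix S assume "S \<in> {S. S \<subseteq> P \<and> card S = m \<and> A \<subseteq> S}"
    then have S: "S \<subseteq> P" "card S = m" "A \<subseteq> S" by auto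
    then have "card (S - A) = m - card A" using fin_A by (simp add: card_Diff_subset)
    with S show "S \<in> (\<lambda>T. T \<union> A) ` {T. T \<subseteq> P - A \<and> card T = m - card A}"
      by (intro image_eqI[of _ _ "S - A"]) auto
  next
    fix S assume "S \<in> (\<lambda>T. T \<union> A) ` {T. T \<subseteq> P - A \<and> card T = m - card A}"
    then obtain T where T: "T \<subseteq> P - A" "card T = m - card A" "S = T \<union> A" by auto
    have "finite T" using T(1) assms(1) finite_subset by blast
    moreover have "T \<inter> A = {}" using T(1) by blast
    ultimately have "card S = card T + card A"
      using fin_A T(3) by (simp add: card_Un_disjoint)
    with T assms(2,3) show "S \<in> {S. S \<subseteq> P \<and> card S = m \<and> A \<subseteq> S}" by auto
  qed
  have "inj_on (\<lambda>T. T \<union> A) {T. T \<subseteq> P - A \<and> card T = m - card A}"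
    by (rule inj_onI) auto
  then have "card {S. S \<subseteq> P \<and> card S = m \<and> A \<subseteq> S} = card (P - A) choose (m - card A)"
    unfolding image using assms(1) by (simp add: card_image n_subsets)
  with assms(2) fin_A show ?thesis by (simp add: card_Diff_subset)
qed

lemma sum_card_blocks_contained:
  assumes "finite P" and "finite B"
    and "\<And>b. b \<in> B \<Longrightarrow> card (block_points P I b) = \<alpha>" and "\<alpha> \<le> m"
  shows "(\<Sum>S\<in>{S. S \<subseteq> P \<and> card S = m}. card {b\<in>B. block_points P I b \<subseteq> S})
    = card B * ((card P - \<alpha>) choose (m - \<alpha>))"
proof -
  let ?Ss = "{S. S \<subseteq> P \<and> card S = m}"
  have "(\<Sum>S\<in>?Ss. card {b\<in>B. block_points P I b \<subseteq> S})
      = (\<Sum>S\<in>?Ss. \<Sum>b\<in>B. if block_points P I b \<subseteq> S then 1 else 0)"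
    using assms(2) by (simp add: sum.If_cases Int_def)
  also have "\<dots> = (\<Sum>b\<in>B. \<Sum>S\<in>?Ss. if block_points P I b \<subseteq> S then 1 else 0)"
    by (rule sum.swap)
  also have "\<dots> = (\<Sum>b\<in>B. card {S\<in>?Ss. block_points P I b \<subseteq> S})"
    using assms(1) by (simp add: sum.If_cases Int_def)
  also have "\<dots> = (\<Sum>b\<in>B. (card P - \<alpha>) choose (m - \<alpha>))"
  proof (rule sum.cong)
    fix b assume "b \<in> B"
    have "{S\<in>?Ss. block_points P I b \<subseteq> S} = {S. S \<subseteq> P \<and> card S = m \<and> block_points P I b \<subseteq> S}"
      by auto
    with card_supersets_with_card[OF assms(1), of "block_points P I b" m] assms(3,4) \<open>b \<in> B\<close>
    show "card {S\<in>?Ss. block_points P I b \<subseteq> S} = (card P - \<alpha>) choose (m - \<alpha>)"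
      by (simp add: block_points_def)
  qed simp
  finally show ?thesis by simp
qed

lemma card_blocks_contained_less:
  assumes "finite B" and "finite S" and "card S < file_size P B I k"
  shows "card {b\<in>B. block_points P I b \<subseteq> S} < k"
proof (rule ccontr)
  assume "\<not> ?thesis"
  then obtain K where K: "K \<subseteq> {b\<in>B. block_points P I b \<subseteq> S}" "card K = k"
    by (meson obtain_subset_with_card_n not_less)
  have "file_size P B I k \<le> card {p\<in>P. \<exists>b\<in>K. (p, b) \<in> I}"
    unfolding file_size_def using assms(1) K by (intro Min_le) auto
  also have "\<dots> \<le> card S"
    using K assms(2) by (intro card_mono) (auto simp: block_points_def)
  finally show False using assms(3) by simp
qed

lemma FR_code_choose_bound:
  assumes "FR_code P B I n \<alpha> v \<rho>" and "M \<le> v" and "M \<le> file_size P B I k"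
    and "\<alpha> < M"
  shows "n * ((M - 1) choose \<alpha>) \<le> (k - 1) * (v choose \<alpha>)"
proof -
  define m where "m = M - 1"
  have fin: "finite P" "finite B" and card: "card B = n" "card P = v"
    and card_block: "\<And>b. b \<in> B \<Longrightarrow> card (block_points P I b) = \<alpha>"
    using assms(1) unfolding FR_code_def block_points_def by auto
  have "\<alpha> \<le> m" "m \<le> v" using assms(2,4) unfolding m_def by auto
  have contained_bound: "card {b\<in>B. block_points P I b \<subseteq> S} \<le> k - 1"
    if "S \<in> {S. S \<subseteq> P \<and> card S = m}" for S
  proof -
    from that have "finite S" and "card S < file_size P B I k"
      using fin(1) assms(3,4) finite_subset unfolding m_def by auto
    then have "card {b\<in>B. block_points P I b \<subseteq> S} < k"
      by (rule card_blocks_contained_less[OF fin(2)])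
    then show ?thesis by simp
  qed
  have "n * ((v - \<alpha>) choose (m - \<alpha>))
      = (\<Sum>S\<in>{S. S \<subseteq> P \<and> card S = m}. card {b\<in>B. block_points P I b \<subseteq> S})"
    using sum_card_blocks_contained[OF fin card_block \<open>\<alpha> \<le> m\<close>] card by simp
  also have "\<dots> \<le> (\<Sum>S\<in>{S. S \<subseteq> P \<and> card S = m}. k - 1)"
    by (rule sum_mono) (rule contained_bound)
  also have "\<dots> = (v choose m) * (k - 1)"
    using fin(1) card(2) by (simp add: n_subsets)
  finally have double_count: "n * ((v - \<alpha>) choose (m - \<alpha>)) \<le> (v choose m) * (k - 1)" .
  have "n * (m choose \<alpha>) * ((v - \<alpha>) choose (m - \<alpha>))
      = n * ((v - \<alpha>) choose (m - \<alpha>)) * (m choose \<alpha>)"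
    by (simp only: mult_ac)
  also have "\<dots> \<le> (v choose m) * (k - 1) * (m choose \<alpha>)"
    using double_count by (rule mult_le_mono1)
  also have "\<dots> = (k - 1) * (v choose \<alpha>) * ((v - \<alpha>) choose (m - \<alpha>))"
    using choose_mult[OF \<open>\<alpha> \<le> m\<close> \<open>m \<le> v\<close>] by (metis mult.assoc mult.commute)
  finally have "n * (m choose \<alpha>) * ((v - \<alpha>) choose (m - \<alpha>))
      \<le> (k - 1) * (v choose \<alpha>) * ((v - \<alpha>) choose (m - \<alpha>))" .
  moreover have "0 < (v - \<alpha>) choose (m - \<alpha>)"
    using \<open>m \<le> v\<close> by (simp add: zero_less_binomial_iff)
  ultimately show ?thesis unfolding m_def by simp
qed

theorem theorem2:
  fixes P :: "'p set" and B :: "'b set" and I :: "('p \<times> 'b) set"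
    and n \<alpha> v \<rho> k M :: nat
  assumes "FR_code P B I n \<alpha> v \<rho>"
    and "1 \<le> k" and "k \<le> n"
    and "1 \<le> M" and "M \<le> v"
    and "M \<le> file_size P B I k"
  shows "int k \<ge> \<lceil>real n * real ((M - 1) choose \<alpha>) / real (v choose \<alpha>)\<rceil> + 1"
proof (cases "\<alpha> < M")
  case False
  then have "M - 1 < \<alpha>" using assms(4) by linarith
  then have zero: "real n * real ((M - 1) choose \<alpha>) / real (v choose \<alpha>) = 0" by simp
  show ?thesis unfolding zero using assms(2) by simp
next
  case True
  from FR_code_choose_bound[OF assms(1,5,6) True]
  have "real n * real ((M - 1) choose \<alpha>) \<le> real (k - 1) * real (v choose \<alpha>)"
    by (metis of_nat_le_iff of_nat_mult)
  moreover have "real (v choose \<alpha>) > 0" using True assms(5) by simp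
  ultimately have "real n * real ((M - 1) choose \<alpha>) / real (v choose \<alpha>) \<le> of_int (int k - 1)"
    using assms(2) by (simp add: divide_le_eq of_nat_diff)
  then have "\<lceil>real n * real ((M - 1) choose \<alpha>) / real (v choose \<alpha>)\<rceil> \<le> int k - 1"
    by (rule ceiling_le)
  then show ?thesis by simp
qed

end
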